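(* Let $\psi\in L^2(\mu)$ be a non-constant real-valued function with $|\psi|=1$, and let $\hat\psi$ be the orthogonal projection $\phi\mapsto\langle\phi,\psi\rangle\psi$. Then $$\big\|[\mathcal D,\pi(\hat\psi)]\big\| = \big\|K\hat\psi-\hat\psi K\big\| = \sup_{\phi\in L^2(\mu),\,|\phi|=1}\sqrt{\langle\phi,\psi\rangle^2-2\langle\phi,\psi\rangle\langle K\phi,\psi\rangle\langle K\psi,\psi\rangle+\langle K\phi,\psi\rangle^2}.$$
   Context: $\Omega=\{0,1\}^{\mathbb N}$ with the shift $\sigma(x_1,x_2,\dots)=(x_2,x_3,\dots)$; for $a\in\{0,1\}$ and $x\in\Omega$, $ax=(a,x_1,x_2,\dots)$. $\mu$ is the measure of maximal entropy of $\sigma$ (the product of the uniform measure $(1/2,1/2)$ on $\{0,1\}$). $L^2(\mu)$ is the real Hilbert space of square-integrable real functions, with inner product $\langle\cdot,\cdot\rangle$ and norm $|\cdot|$. The Ruelle operator is $L\phi(x)=\frac12(\phi(0x)+\phi(1x))$ and the Koopman operator is $K\phi=\phi\circ\sigma$; both are bounded on $L^2(\mu)$ and $K$ is the adjoint of $L$. On $\mathcal H=L^2(\mu)\times L^2(\mu)$, with norm $|(\phi_1,\phi_2)|^2=|\phi_1|^2+|\phi_2|^2$, the Dirac operator is $\mathcal D(\phi_1,\phi_2)=(K\phi_2,L\phi_1)$, i.e. $\mathcal D=\begin{pmatrix}0&K\\ L&0\end{pmatrix}$, and for a bounded operator $A$ on $L^2(\mu)$, $\pi(A)=\begin{pmatrix}A&0\\0&A\end{pmatrix}$.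 Then $[\mathcal D,\pi(A)]=\mathcal D\pi(A)-\pi(A)\mathcal D=\begin{pmatrix}0&KA-AK\\ LA-AL&0\end{pmatrix}$. $\|\cdot\|$ denotes the operator norm. *)

theory Defs
  imports "HOL-Probability.Probability"
begin

type_synonym omega = "nat \<Rightarrow> bool"

text \<open>The one-sided full shift on two symbols and its maximal entropy measure
  (the Bernoulli(1/2,1/2) product measure).\<close>

definition shift :: "omega \<Rightarrow> omega" where
  "shift x = (\<lambda>n. x (Suc n))"

definition prepend :: "bool \<Rightarrow> omega \<Rightarrow> omega" where
  "prepend a x = (\<lambda>n. case n of 0 \<Rightarrow> a | Suc m \<Rightarrow> x m)"

definition mu :: "omega measure" where
  "mu = (\<Pi>\<^sub>M i\<in>UNIV. measure_pmf (bernoulli_pmf (1/2)))"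

text \<open>Real square-integrable functions (representatives of elements of L^2(mu)).\<close>

definition L2 :: "(omega \<Rightarrow> real) set" where
  "L2 = {f. f \<in> borel_measurable mu \<and> integrable mu (\<lambda>x. (f x)\<^sup>2)}"

definition l2inner :: "(omega \<Rightarrow> real) \<Rightarrow> (omega \<Rightarrow> real) \<Rightarrow> real" where
  "l2inner f g = (\<integral>x. f x * g x \<partial>mu)"

definition l2norm :: "(omega \<Rightarrow> real) \<Rightarrow> real" where
  "l2norm f = sqrt (l2inner f f)"

definition ruelle :: "(omega \<Rightarrow> real) \<Rightarrow> (omega \<Rightarrow> real)" where
  "ruelle f = (\<lambda>x. (f (prepend False x) + f (prepend True x)) / 2)"

definition koopman :: "(omega \<Rightarrow> real) \<Rightarrow> (omega \<Rightarrow> real)" where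
  "koopman f = f \<circ> shift"

definition opnorm :: "((omega \<Rightarrow> real) \<Rightarrow> (omega \<Rightarrow> real)) \<Rightarrow> real" where
  "opnorm A = Sup ((\<lambda>\<phi>. l2norm (A \<phi>)) ` {\<phi> \<in> L2. l2norm \<phi> = 1})"

definition hnorm :: "(omega \<Rightarrow> real) \<times> (omega \<Rightarrow> real) \<Rightarrow> real" where
  "hnorm p = sqrt ((l2norm (fst p))\<^sup>2 + (l2norm (snd p))\<^sup>2)"

definition hopnorm ::
  "((omega \<Rightarrow> real) \<times> (omega \<Rightarrow> real) \<Rightarrow> (omega \<Rightarrow> real) \<times> (omega \<Rightarrow> real)) \<Rightarrow> real" where
  "hopnorm T = Sup ((\<lambda>p. hnorm (T p)) ` {p. fst p \<in> L2 \<and> snd p \<in> L2 \<and> hnorm p = 1})"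

definition dirac :: "(omega \<Rightarrow> real) \<times> (omega \<Rightarrow> real) \<Rightarrow> (omega \<Rightarrow> real) \<times> (omega \<Rightarrow> real)" where
  "dirac p = (koopman (snd p), ruelle (fst p))"

definition piop :: "((omega \<Rightarrow> real) \<Rightarrow> (omega \<Rightarrow> real)) \<Rightarrow>
    (omega \<Rightarrow> real) \<times> (omega \<Rightarrow> real) \<Rightarrow> (omega \<Rightarrow> real) \<times> (omega \<Rightarrow> real)" where
  "piop A p = (A (fst p), A (snd p))"

definition dirac_comm :: "((omega \<Rightarrow> real) \<Rightarrow> (omega \<Rightarrow> real)) \<Rightarrow>
    (omega \<Rightarrow> real) \<times> (omega \<Rightarrow> real) \<Rightarrow> (omega \<Rightarrow> real) \<times> (omega \<Rightarrow> real)" where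
  "dirac_comm A p =
     (let u = dirac (piop A p); v = piop A (dirac p)
      in (\<lambda>x. fst u x - fst v x, \<lambda>x. snd u x - snd v x))"

definition proj :: "(omega \<Rightarrow> real) \<Rightarrow> (omega \<Rightarrow> real) \<Rightarrow> (omega \<Rightarrow> real)" where
  "proj \<psi> \<phi> = (\<lambda>x. l2inner \<phi> \<psi> * \<psi> x)"

end

theory Submission
  imports Defs
begin

text \<open>
  Shift invariance of \<open>\<mu>\<close> makes \<open>K\<close> an isometry of \<open>L\<^sup>2(\<mu>)\<close>, and since the Ruelle
  operator preserves \<open>\<mu>\<close>-integrals, \<open>L = K\<^sup>*\<close>. For the self-adjoint projection \<open>P\<close> onto
  \<open>\<psi>\<close> this gives \<open>[L,P] = -[K,P]\<^sup>*\<close>, so the antidiagonal block operator \<open>[D,\<pi>(P)]\<close>, with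
  entries \<open>[K,P]\<close> and \<open>[L,P]\<close>, has norm \<open>max \<parallel>[K,P]\<parallel> \<parallel>[L,P]\<parallel> = \<parallel>[K,P]\<parallel>\<close>. Finally
  \<open>[K,P]\<phi> = \<langle>\<phi>,\<psi>\<rangle> K\<psi> - \<langle>K\<phi>,\<psi>\<rangle> \<psi>\<close>, and expanding its squared norm using
  \<open>|K\<psi>| = |\<psi>| = 1\<close> yields the quadratic form under the square root.
\<close>

section \<open>The shift space and its Bernoulli measure\<close>

abbreviation coin :: "bool measure" where
  "coin \<equiv> measure_pmf (bernoulli_pmf (1/2))"

interpretation coin_sequence: sequence_space coin
  by unfold_locales

lemma mu_eq_coin_sequence: "mu = coin_sequence.S"
  by (simp add: mu_def)

lemma prob_space_mu: "prob_space mu"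
  by (simp add: mu_eq_coin_sequence coin_sequence.prob_space_axioms)

lemma shift_prepend [simp]: "shift (prepend a x) = x"
  by (simp add: shift_def prepend_def)

lemma measurable_shift [measurable]: "shift \<in> mu \<rightarrow>\<^sub>M mu"
  unfolding mu_def shift_def
  by (rule measurable_PiM_single'[where f="\<lambda>i x. x (Suc i)", simplified]) (auto simp: space_PiM)

lemma prepend_eq_case_nat: "prepend a = case_nat a"
  by (simp add: prepend_def fun_eq_iff split: nat.split)

lemma measurable_prepend [measurable]: "prepend a \<in> mu \<rightarrow>\<^sub>M mu"
  unfolding mu_def prepend_eq_case_nat by measurable

lemma (in sequence_space) distr_shift_sequence: "distr S S (\<lambda>\<omega> n. \<omega> (Suc n)) = S"
  using distr_PiM_reindex[of UNIV "\<lambda>_. M" Suc UNIV] M.prob_space_axioms by (simp add: restrict_UNIV)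

lemma (in sequence_space)
  fixes h :: "(nat \<Rightarrow> 'a) \<Rightarrow> real"
  assumes h: "integrable S h"
  shows AE_integrable_case_nat: "AE s in M. integrable S (\<lambda>\<omega>. h (case_nat s \<omega>))"
    and integral_case_nat: "(\<integral>\<omega>. h \<omega> \<partial>S) = (\<integral>s. (\<integral>\<omega>. h (case_nat s \<omega>) \<partial>S) \<partial>M)"
proof -
  interpret pair_sigma_finite M S by unfold_locales
  have [measurable]: "h \<in> borel_measurable S" using h by simp
  have hi: "integrable (M \<Otimes>\<^sub>M S) (\<lambda>(s, \<omega>). h (case_nat s \<omega>))"
    using h by (subst (asm) PiM_iter[symmetric]) (simp add: integrable_distr_eq split_beta')
  show "AE s in M. integrable S (\<lambda>\<omega>. h (case_nat s \<omega>))"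
    using AE_integrable_fst'[OF hi] by simp
  have "(\<integral>\<omega>. h \<omega> \<partial>S) = (\<integral>\<omega>. h \<omega> \<partial>distr (M \<Otimes>\<^sub>M S) S (\<lambda>(s, \<omega>). case_nat s \<omega>))"
    by (simp only: PiM_iter)
  also have "\<dots> = (\<integral>(s, \<omega>). h (case_nat s \<omega>) \<partial>(M \<Otimes>\<^sub>M S))"
    by (simp add: integral_distr split_beta')
  also have "\<dots> = (\<integral>s. (\<integral>\<omega>. h (case_nat s \<omega>) \<partial>S) \<partial>M)"
    using integral_fst'[OF hi] by (simp add: split_beta')
  finally show "(\<integral>\<omega>. h \<omega> \<partial>S) = (\<integral>s. (\<integral>\<omega>. h (case_nat s \<omega>) \<partial>S) \<partial>M)" .
qed

lemma integrable_prepend: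
  fixes h :: "omega \<Rightarrow> real"
  assumes "integrable mu h"
  shows "integrable mu (\<lambda>x. h (prepend a x))"
  using coin_sequence.AE_integrable_case_nat[of h] assms
  by (simp add: mu_eq_coin_sequence prepend_eq_case_nat AE_measure_pmf_iff set_pmf_bernoulli)

lemma integrable_ruelle:
  fixes h :: "omega \<Rightarrow> real"
  assumes "integrable mu h"
  shows "integrable mu (ruelle h)"
  unfolding ruelle_def using integrable_prepend[OF assms] by simp

lemma integral_ruelle:
  fixes h :: "omega \<Rightarrow> real"
  assumes "integrable mu h"
  shows "(\<integral>x. ruelle h x \<partial>mu) = (\<integral>x. h x \<partial>mu)"
proof -
  have "(\<integral>x. h x \<partial>mu) = (\<integral>s. (\<integral>x. h (prepend s x) \<partial>mu) \<partial>coin)"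
    using coin_sequence.integral_case_nat[of h] assms
    by (simp add: mu_eq_coin_sequence prepend_eq_case_nat)
  also have "\<dots> = ((\<integral>x. h (prepend False x) \<partial>mu) + (\<integral>x. h (prepend True x) \<partial>mu)) / 2"
    by (subst integral_measure_pmf[of UNIV]) (auto simp: UNIV_bool)
  also have "\<dots> = (\<integral>x. ruelle h x \<partial>mu)"
    unfolding ruelle_def using integrable_prepend[OF assms] by simp
  finally show ?thesis ..
qed

lemma distr_shift_mu: "distr mu mu shift = mu"
  using coin_sequence.distr_shift_sequence by (simp add: mu_eq_coin_sequence shift_def[abs_def])

lemma
  fixes g :: "omega \<Rightarrow> real"
  assumes "integrable mu g"
  shows integrable_koopman: "integrable mu (koopman g)"
    and integral_koopman: "(\<integral>x. koopman g x \<partial>mu) = (\<integral>x. g x \<partial>mu)"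
  using assms integrable_distr_eq[of shift mu mu g] integral_distr[of shift mu mu g]
  by (simp_all add: distr_shift_mu koopman_def o_def)

lemma measurable_koopman:
  assumes [measurable]: "f \<in> borel_measurable mu"
  shows "koopman f \<in> borel_measurable mu"
  unfolding koopman_def by measurable

lemma measurable_ruelle:
  assumes [measurable]: "f \<in> borel_measurable mu"
  shows "ruelle f \<in> borel_measurable mu"
  unfolding ruelle_def by measurable

section \<open>Square-integrable functions\<close>

lemma L2_D:
  assumes "f \<in> L2"
  shows "f \<in> borel_measurable mu" and "integrable mu (\<lambda>x. (f x)\<^sup>2)"
  using assms by (auto simp: L2_def)

lemma integrable_mult_L2:
  assumes "f \<in> L2" "g \<in> L2"
  shows "integrable mu (\<lambda>x. f x * g x)"
proof (rule Bochner_Integration.integrable_bound)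
  show "integrable mu (\<lambda>x. (f x)\<^sup>2 + (g x)\<^sup>2)"
    using assms by (auto simp: L2_def)
  show "(\<lambda>x. f x * g x) \<in> borel_measurable mu"
    using assms by (auto simp: L2_def)
  have "\<bar>f x * g x\<bar> \<le> (f x)\<^sup>2 + (g x)\<^sup>2" for x
    using sum_squares_bound[of "\<bar>f x\<bar>" "\<bar>g x\<bar>"] abs_ge_zero[of "f x * g x"]
    unfolding abs_mult mult.assoc power2_abs by linarith
  then show "AE x in mu. norm (f x * g x) \<le> norm ((f x)\<^sup>2 + (g x)\<^sup>2)"
    by simp
qed

lemma L2_lincomb:
  assumes "f \<in> L2" "g \<in> L2"
  shows "(\<lambda>x. a * f x - b * g x) \<in> L2"
proof -
  have "(\<lambda>x. (a * f x - b * g x)\<^sup>2) = (\<lambda>x. a\<^sup>2 * (f x)\<^sup>2 - 2 * a * b * (f x * g x) + b\<^sup>2 * (g x)\<^sup>2)"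
    by (simp add: fun_eq_iff power2_eq_square algebra_simps)
  moreover have "integrable mu \<dots>"
    using L2_D(2)[OF assms(1)] L2_D(2)[OF assms(2)] integrable_mult_L2[OF assms]
    by (intro Bochner_Integration.integrable_add Bochner_Integration.integrable_diff
        integrable_mult_right)
  moreover have "(\<lambda>x. a * f x - b * g x) \<in> borel_measurable mu"
    using L2_D(1)[OF assms(1)] L2_D(1)[OF assms(2)] by measurable
  ultimately show ?thesis
    by (simp add: L2_def)
qed

lemma L2_scale: "f \<in> L2 \<Longrightarrow> (\<lambda>x. c * f x) \<in> L2"
  using L2_lincomb[of f f c 0] by simp

lemma l2inner_commute: "l2inner f g = l2inner g f"
  unfolding l2inner_def by (simp add: mult.commute)

lemma l2inner_scale_left: "l2inner (\<lambda>x. c * f x) g = c * l2inner f g"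
  unfolding l2inner_def by (simp add: mult.assoc)

lemma l2inner_lincomb_left:
  assumes "f \<in> L2" "g \<in> L2" "h \<in> L2"
  shows "l2inner (\<lambda>x. a * f x - b * g x) h = a * l2inner f h - b * l2inner g h"
proof -
  have "l2inner (\<lambda>x. a * f x - b * g x) h = (\<integral>x. a * (f x * h x) - b * (g x * h x) \<partial>mu)"
    unfolding l2inner_def by (simp add: algebra_simps)
  then show ?thesis
    using integrable_mult_L2[OF assms(1,3)] integrable_mult_L2[OF assms(2,3)] by (simp add: l2inner_def)
qed

lemma l2inner_lincomb_right:
  assumes "f \<in> L2" "g \<in> L2" "h \<in> L2"
  shows "l2inner h (\<lambda>x. a * f x - b * g x) = a * l2inner h f - b * l2inner h g"
  using l2inner_lincomb_left[OF assms] by (simp add: l2inner_commute)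

lemma l2inner_self_nonneg: "0 \<le> l2inner f f"
  unfolding l2inner_def by (rule integral_nonneg_AE) simp

lemma l2norm_nonneg: "0 \<le> l2norm f"
  by (simp add: l2norm_def l2inner_self_nonneg)

lemma l2norm_squared: "(l2norm f)\<^sup>2 = l2inner f f"
  by (simp add: l2norm_def l2inner_self_nonneg)

lemma l2norm_scale: "l2norm (\<lambda>x. c * f x) = \<bar>c\<bar> * l2norm f"
proof -
  have "l2inner (\<lambda>x. c * f x) (\<lambda>x. c * f x) = c\<^sup>2 * l2inner f f"
    by (simp add: l2inner_scale_left l2inner_commute[of f "\<lambda>x. c * f x"] power2_eq_square)
  then show ?thesis
    by (simp add: l2norm_def real_sqrt_mult)
qed

lemma L2_zero: "(\<lambda>x. 0) \<in> L2"
  by (simp add: L2_def)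

lemma l2norm_zero [simp]: "l2norm (\<lambda>x. 0) = 0"
  by (simp add: l2norm_def l2inner_def)

lemma l2norm_lincomb_squared:
  assumes "f \<in> L2" "g \<in> L2"
  shows "(l2norm (\<lambda>x. a * f x - b * g x))\<^sup>2
           = a\<^sup>2 * (l2norm f)\<^sup>2 - 2 * a * b * l2inner f g + b\<^sup>2 * (l2norm g)\<^sup>2"
proof -
  have "l2inner (\<lambda>x. a * f x - b * g x) (\<lambda>x. a * f x - b * g x)
      = a * (a * l2inner f f - b * l2inner f g) - b * (a * l2inner g f - b * l2inner g g)"
    using l2inner_lincomb_left[OF assms L2_lincomb[OF assms]]
      l2inner_lincomb_right[OF assms assms(1)] l2inner_lincomb_right[OF assms assms(2)]
    by simp
  then show ?thesis
    unfolding l2norm_squared by (simp add: l2inner_commute[of g f] power2_eq_square algebra_simps)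
qed

lemma discrim_le_if_quadratic_nonneg:
  fixes A B C :: real
  assumes "0 \<le> A" and nonneg: "\<And>t. 0 \<le> A * t\<^sup>2 - 2 * B * t + C"
  shows "B\<^sup>2 \<le> A * C"
proof (cases "A = 0")
  case True
  have "0 \<le> - 2 * B * ((C + 1) / (2 * B)) + C" if "B \<noteq> 0"
    using nonneg[of "(C + 1) / (2 * B)"] True by simp
  then have "B = 0"
    by (cases "B = 0") auto
  with True show ?thesis by simp
next
  case False
  with \<open>0 \<le> A\<close> have "0 < A" by simp
  have "0 \<le> A * (B / A)\<^sup>2 - 2 * B * (B / A) + C"
    by (rule nonneg)
  then show ?thesis
    using \<open>0 < A\<close> by (simp add: power2_eq_square field_simps)
qed

lemma l2inner_Cauchy_Schwarz:
  assumes "f \<in> L2" "g \<in> L2"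
  shows "\<bar>l2inner f g\<bar> \<le> l2norm f * l2norm g"
proof (rule power2_le_imp_le)
  have "0 \<le> (l2norm f)\<^sup>2 * t\<^sup>2 - 2 * l2inner f g * t + (l2norm g)\<^sup>2" for t
    using zero_le_power2[of "l2norm (\<lambda>x. t * f x - 1 * g x)"]
    unfolding l2norm_lincomb_squared[OF assms] by (simp add: algebra_simps)
  then have "(l2inner f g)\<^sup>2 \<le> (l2norm f)\<^sup>2 * (l2norm g)\<^sup>2"
    by (intro discrim_le_if_quadratic_nonneg) auto
  then show "\<bar>l2inner f g\<bar>\<^sup>2 \<le> (l2norm f * l2norm g)\<^sup>2"
    by (simp add: power_mult_distrib)
  show "0 \<le> l2norm f * l2norm g"
    by (simp add: l2norm_nonneg)
qed

lemma l2norm_lincomb_le: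
  assumes "f \<in> L2" "g \<in> L2"
  shows "l2norm (\<lambda>x. a * f x - b * g x) \<le> \<bar>a\<bar> * l2norm f + \<bar>b\<bar> * l2norm g"
proof (rule power2_le_imp_le)
  have "- (a * b * l2inner f g) \<le> \<bar>a\<bar> * \<bar>b\<bar> * \<bar>l2inner f g\<bar>"
    by (metis abs_ge_minus_self abs_mult)
  also have "\<dots> \<le> \<bar>a\<bar> * \<bar>b\<bar> * (l2norm f * l2norm g)"
    by (intro mult_left_mono l2inner_Cauchy_Schwarz[OF assms]) simp
  finally show "(l2norm (\<lambda>x. a * f x - b * g x))\<^sup>2 \<le> (\<bar>a\<bar> * l2norm f + \<bar>b\<bar> * l2norm g)\<^sup>2"
    unfolding l2norm_lincomb_squared[OF assms] by (simp add: power2_eq_square algebra_simps)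
  show "0 \<le> \<bar>a\<bar> * l2norm f + \<bar>b\<bar> * l2norm g"
    by (simp add: l2norm_nonneg)
qed

section \<open>The Koopman and Ruelle operators on \<open>L\<^sup>2\<close>\<close>

lemma koopman_scale: "koopman (\<lambda>x. c * f x) = (\<lambda>x. c * koopman f x)"
  by (simp add: koopman_def o_def)

lemma ruelle_scale: "ruelle (\<lambda>x. c * f x) = (\<lambda>x. c * ruelle f x)"
  by (simp add: ruelle_def fun_eq_iff field_simps)

lemma koopman_L2:
  assumes "f \<in> L2"
  shows "koopman f \<in> L2"
  using measurable_koopman[OF L2_D(1)[OF assms]] integrable_koopman[OF L2_D(2)[OF assms]]
  by (simp add: L2_def koopman_def o_def)

lemma l2inner_koopman:
  assumes "f \<in> L2" "g \<in> L2"
  shows "l2inner (koopman f) (koopman g) = l2inner f g"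
  using integral_koopman[OF integrable_mult_L2[OF assms]] by (simp add: l2inner_def koopman_def)

lemma l2norm_koopman: "f \<in> L2 \<Longrightarrow> l2norm (koopman f) = l2norm f"
  by (simp add: l2norm_def l2inner_koopman)

lemma ruelle_squared_le: "(ruelle f x)\<^sup>2 \<le> ruelle (\<lambda>y. (f y)\<^sup>2) x"
proof -
  have "0 \<le> (f (prepend False x) - f (prepend True x))\<^sup>2"
    by simp
  then show ?thesis
    by (simp add: ruelle_def power2_eq_square field_simps)
qed

lemma ruelle_L2:
  assumes "f \<in> L2"
  shows "ruelle f \<in> L2"
proof -
  have "integrable mu (\<lambda>x. (ruelle f x)\<^sup>2)"
  proof (rule Bochner_Integration.integrable_bound)
    show "integrable mu (ruelle (\<lambda>y. (f y)\<^sup>2))"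
      using integrable_ruelle[OF L2_D(2)[OF assms]] .
    show "(\<lambda>x. (ruelle f x)\<^sup>2) \<in> borel_measurable mu"
      using measurable_ruelle[OF L2_D(1)[OF assms]] by measurable
    show "AE x in mu. norm ((ruelle f x)\<^sup>2) \<le> norm (ruelle (\<lambda>y. (f y)\<^sup>2) x)"
      using ruelle_squared_le order_trans[OF zero_le_power2 ruelle_squared_le] by simp
  qed
  then show ?thesis
    using measurable_ruelle[OF L2_D(1)[OF assms]] by (simp add: L2_def)
qed

lemma ruelle_mult_koopman: "ruelle (\<lambda>x. f x * koopman g x) = (\<lambda>x. ruelle f x * g x)"
  by (simp add: ruelle_def koopman_def fun_eq_iff field_simps)

lemma l2inner_ruelle_koopman:
  assumes "f \<in> L2" "g \<in> L2"
  shows "l2inner (ruelle f) g = l2inner f (koopman g)"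
  using integral_ruelle[OF integrable_mult_L2[OF assms(1) koopman_L2[OF assms(2)]]]
  by (simp add: l2inner_def ruelle_mult_koopman)

section \<open>Operator norms\<close>

text \<open>
  Elements of \<^const>\<open>L2\<close> are representatives, so \<open>l2norm \<phi> = 0\<close> does not force \<open>A \<phi>\<close> to
  vanish; the explicit bound supplies this.
\<close>

definition bounded_homogeneous_op :: "((omega \<Rightarrow> real) \<Rightarrow> (omega \<Rightarrow> real)) \<Rightarrow> bool" where
  "bounded_homogeneous_op A \<longleftrightarrow>
     (\<forall>\<phi>\<in>L2. A \<phi> \<in> L2 \<and> (\<forall>c. A (\<lambda>x. c * \<phi> x) = (\<lambda>x. c * A \<phi> x))) \<and>
     (\<exists>C. \<forall>\<phi>\<in>L2. l2norm (A \<phi>) \<le> C * l2norm \<phi>)"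

abbreviation L2_sphere :: "(omega \<Rightarrow> real) set" where
  "L2_sphere \<equiv> {\<phi> \<in> L2. l2norm \<phi> = 1}"

lemma one_in_L2_sphere: "(\<lambda>x. 1) \<in> L2_sphere"
proof -
  interpret prob_space mu
    by (rule prob_space_mu)
  show ?thesis
    using prob_space by (simp add: L2_def l2norm_def l2inner_def)
qed

lemma bounded_homogeneous_opD:
  assumes "bounded_homogeneous_op A" "\<phi> \<in> L2"
  shows "A \<phi> \<in> L2" and "A (\<lambda>x. c * \<phi> x) = (\<lambda>x. c * A \<phi> x)"
  using assms unfolding bounded_homogeneous_op_def by auto

lemma bounded_homogeneous_op_zero:
  assumes "bounded_homogeneous_op A"
  shows "A (\<lambda>x. 0) = (\<lambda>x. 0)"
  using bounded_homogeneous_opD(2)[OF assms L2_zero, of 0] by simp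

lemma bdd_above_opnorm:
  assumes "bounded_homogeneous_op A"
  shows "bdd_above ((\<lambda>\<phi>. l2norm (A \<phi>)) ` L2_sphere)"
proof -
  obtain C where "\<forall>\<phi>\<in>L2. l2norm (A \<phi>) \<le> C * l2norm \<phi>"
    using assms by (auto simp: bounded_homogeneous_op_def)
  then show ?thesis
    by (intro bdd_aboveI2[where M = C]) auto
qed

lemma opnorm_upper:
  "bounded_homogeneous_op A \<Longrightarrow> \<phi> \<in> L2_sphere \<Longrightarrow> l2norm (A \<phi>) \<le> opnorm A"
  unfolding opnorm_def by (rule cSup_upper) (auto intro: bdd_above_opnorm)

lemma opnorm_least:
  "(\<And>\<phi>. \<phi> \<in> L2_sphere \<Longrightarrow> l2norm (A \<phi>) \<le> c) \<Longrightarrow> opnorm A \<le> c"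
  unfolding opnorm_def using one_in_L2_sphere by (intro cSup_least) auto

lemma opnorm_nonneg: "bounded_homogeneous_op A \<Longrightarrow> 0 \<le> opnorm A"
  using opnorm_upper[OF _ one_in_L2_sphere] l2norm_nonneg order_trans by blast

lemma l2norm_le_opnorm:
  assumes A: "bounded_homogeneous_op A" and "\<phi> \<in> L2"
  shows "l2norm (A \<phi>) \<le> opnorm A * l2norm \<phi>"
proof (cases "l2norm \<phi> = 0")
  case True
  obtain C where "\<forall>\<phi>\<in>L2. l2norm (A \<phi>) \<le> C * l2norm \<phi>"
    using A by (auto simp: bounded_homogeneous_op_def)
  with True \<open>\<phi> \<in> L2\<close> show ?thesis
    using l2norm_nonneg[of "A \<phi>"] by force
next
  case False
  then have pos: "0 < l2norm \<phi>"
    using l2norm_nonneg[of \<phi>] by simp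
  have "l2norm (\<lambda>x. (1 / l2norm \<phi>) * \<phi> x) = 1"
    unfolding l2norm_scale using pos by simp
  then have "(\<lambda>x. (1 / l2norm \<phi>) * \<phi> x) \<in> L2_sphere"
    using L2_scale[OF \<open>\<phi> \<in> L2\<close>] by blast
  then have "l2norm (A (\<lambda>x. (1 / l2norm \<phi>) * \<phi> x)) \<le> opnorm A"
    by (rule opnorm_upper[OF A])
  moreover note bounded_homogeneous_opD(2)[OF A \<open>\<phi> \<in> L2\<close>, of "1 / l2norm \<phi>"]
  ultimately have "\<bar>1 / l2norm \<phi>\<bar> * l2norm (A \<phi>) \<le> opnorm A"
    by (simp only: l2norm_scale)
  then show ?thesis
    using pos by (simp add: field_simps)
qed

lemma l2norm_le_opnorm_adjoint:
  assumes A: "bounded_homogeneous_op A" and B: "\<And>\<phi>. \<phi> \<in> L2 \<Longrightarrow> B \<phi> \<in> L2"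
    and adjoint: "\<And>\<phi> g. \<phi> \<in> L2 \<Longrightarrow> g \<in> L2 \<Longrightarrow> \<bar>l2inner (B \<phi>) g\<bar> = \<bar>l2inner \<phi> (A g)\<bar>"
    and \<phi>: "\<phi> \<in> L2"
  shows "l2norm (B \<phi>) \<le> opnorm A * l2norm \<phi>"
proof -
  have "(l2norm (B \<phi>))\<^sup>2 = \<bar>l2inner \<phi> (A (B \<phi>))\<bar>"
    using adjoint[OF \<phi> B[OF \<phi>]] l2inner_self_nonneg[of "B \<phi>"] by (simp add: l2norm_squared)
  also have "\<dots> \<le> l2norm \<phi> * l2norm (A (B \<phi>))"
    using l2inner_Cauchy_Schwarz[OF \<phi> bounded_homogeneous_opD(1)[OF A B[OF \<phi>]]] .
  also have "\<dots> \<le> l2norm \<phi> * (opnorm A * l2norm (B \<phi>))"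
    using l2norm_le_opnorm[OF A B[OF \<phi>]] by (simp add: l2norm_nonneg mult_left_mono)
  finally have "l2norm (B \<phi>) * l2norm (B \<phi>) \<le> (opnorm A * l2norm \<phi>) * l2norm (B \<phi>)"
    by (simp add: power2_eq_square algebra_simps)
  then show ?thesis
    using l2norm_nonneg[of "B \<phi>"] opnorm_nonneg[OF A] l2norm_nonneg[of \<phi>]
    by (cases "l2norm (B \<phi>) = 0") auto
qed

lemma hnorm_antidiagonal_le:
  assumes A: "bounded_homogeneous_op A" and B: "bounded_homogeneous_op B"
    and "fst p \<in> L2" "snd p \<in> L2"
  shows "hnorm (A (snd p), B (fst p)) \<le> max (opnorm A) (opnorm B) * hnorm p"
proof -
  let ?m = "max (opnorm A) (opnorm B)"
  have "l2norm (A (snd p)) \<le> ?m * l2norm (snd p)"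
    using l2norm_le_opnorm[OF A \<open>snd p \<in> L2\<close>] mult_right_mono[OF max.cobounded1 l2norm_nonneg]
    by (rule order_trans)
  moreover have "l2norm (B (fst p)) \<le> ?m * l2norm (fst p)"
    using l2norm_le_opnorm[OF B \<open>fst p \<in> L2\<close>] mult_right_mono[OF max.cobounded2 l2norm_nonneg]
    by (rule order_trans)
  ultimately have "(l2norm (A (snd p)))\<^sup>2 + (l2norm (B (fst p)))\<^sup>2
      \<le> (?m * l2norm (snd p))\<^sup>2 + (?m * l2norm (fst p))\<^sup>2"
    by (intro add_mono power_mono) (simp_all add: l2norm_nonneg)
  also have "\<dots> = ?m\<^sup>2 * ((l2norm (fst p))\<^sup>2 + (l2norm (snd p))\<^sup>2)"
    by (simp add: algebra_simps)
  finally have "hnorm (A (snd p), B (fst p)) \<le> sqrt (?m\<^sup>2) * hnorm p"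
    unfolding hnorm_def real_sqrt_mult[symmetric] by (simp only: fst_conv snd_conv real_sqrt_le_mono)
  then show ?thesis
    using opnorm_nonneg[OF A] by simp
qed

lemma hopnorm_antidiagonal:
  assumes A: "bounded_homogeneous_op A" and B: "bounded_homogeneous_op B"
  shows "hopnorm (\<lambda>p. (A (snd p), B (fst p))) = max (opnorm A) (opnorm B)"
proof -
  define T where "T = {p. fst p \<in> L2 \<and> snd p \<in> L2 \<and> hnorm p = 1}"
  let ?V = "(\<lambda>p. hnorm (A (snd p), B (fst p))) ` T"
  have upper: "hnorm (A (snd p), B (fst p)) \<le> max (opnorm A) (opnorm B)" if "p \<in> T" for p
    using that hnorm_antidiagonal_le[OF A B, of p] by (simp add: T_def)
  have "((\<lambda>x. 0), \<phi>) \<in> T" "(\<phi>, (\<lambda>x. 0)) \<in> T" if "\<phi> \<in> L2_sphere" for \<phi>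
    using that L2_zero by (auto simp: T_def hnorm_def)
  then have in_V: "l2norm (A \<phi>) \<in> ?V" "l2norm (B \<phi>) \<in> ?V" if "\<phi> \<in> L2_sphere" for \<phi>
    using that bounded_homogeneous_op_zero[OF A] bounded_homogeneous_op_zero[OF B]
    by (force simp: hnorm_def l2norm_nonneg)+
  have "bdd_above ?V"
    using upper by (rule bdd_aboveI2)
  then have "max (opnorm A) (opnorm B) \<le> Sup ?V"
    using in_V by (auto intro!: opnorm_least cSup_upper)
  moreover have "Sup ?V \<le> max (opnorm A) (opnorm B)"
    using upper in_V(1)[OF one_in_L2_sphere] by (intro cSup_least) auto
  ultimately have "Sup ?V = max (opnorm A) (opnorm B)"
    by (rule antisym[rotated])
  then show ?thesis
    by (simp add: hopnorm_def T_def)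
qed

section \<open>Commutators with the projection onto \<open>\<psi>\<close>\<close>

definition koopman_comm :: "(omega \<Rightarrow> real) \<Rightarrow> (omega \<Rightarrow> real) \<Rightarrow> (omega \<Rightarrow> real)" where
  "koopman_comm \<psi> \<phi> = (\<lambda>x. koopman (proj \<psi> \<phi>) x - proj \<psi> (koopman \<phi>) x)"

definition ruelle_comm :: "(omega \<Rightarrow> real) \<Rightarrow> (omega \<Rightarrow> real) \<Rightarrow> (omega \<Rightarrow> real)" where
  "ruelle_comm \<psi> \<phi> = (\<lambda>x. ruelle (proj \<psi> \<phi>) x - proj \<psi> (ruelle \<phi>) x)"

lemma dirac_comm_proj:
  "dirac_comm (proj \<psi>) = (\<lambda>p. (koopman_comm \<psi> (snd p), ruelle_comm \<psi> (fst p)))"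
  by (simp add: fun_eq_iff dirac_comm_def dirac_def piop_def koopman_comm_def ruelle_comm_def)

lemma koopman_comm_eq:
  "koopman_comm \<psi> \<phi> = (\<lambda>x. l2inner \<phi> \<psi> * koopman \<psi> x - l2inner (koopman \<phi>) \<psi> * \<psi> x)"
  by (simp add: koopman_comm_def proj_def koopman_def)

lemma ruelle_comm_eq:
  "ruelle_comm \<psi> \<phi> = (\<lambda>x. l2inner \<phi> \<psi> * ruelle \<psi> x - l2inner (ruelle \<phi>) \<psi> * \<psi> x)"
  by (simp add: ruelle_comm_def proj_def ruelle_def fun_eq_iff field_simps)

lemma bounded_homogeneous_op_koopman_comm:
  assumes \<psi>: "\<psi> \<in> L2"
  shows "bounded_homogeneous_op (koopman_comm \<psi>)"
  unfolding bounded_homogeneous_op_def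
proof (intro conjI ballI allI exI)
  fix \<phi> c
  assume \<phi>: "\<phi> \<in> L2"
  show "koopman_comm \<psi> \<phi> \<in> L2"
    unfolding koopman_comm_eq using koopman_L2[OF \<psi>] \<psi> by (rule L2_lincomb)
  show "koopman_comm \<psi> (\<lambda>x. c * \<phi> x) = (\<lambda>x. c * koopman_comm \<psi> \<phi> x)"
    unfolding koopman_comm_eq koopman_scale l2inner_scale_left by (simp add: algebra_simps)
  have "\<bar>l2inner \<phi> \<psi>\<bar> \<le> l2norm \<phi> * l2norm \<psi>" "\<bar>l2inner (koopman \<phi>) \<psi>\<bar> \<le> l2norm \<phi> * l2norm \<psi>"
    using l2inner_Cauchy_Schwarz[OF \<phi> \<psi>] l2inner_Cauchy_Schwarz[OF koopman_L2[OF \<phi>] \<psi>]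
    by (simp_all add: l2norm_koopman[OF \<phi>])
  then have "\<bar>l2inner \<phi> \<psi>\<bar> * l2norm \<psi> + \<bar>l2inner (koopman \<phi>) \<psi>\<bar> * l2norm \<psi>
      \<le> l2norm \<phi> * l2norm \<psi> * l2norm \<psi> + l2norm \<phi> * l2norm \<psi> * l2norm \<psi>"
    by (intro add_mono mult_right_mono) (simp_all add: l2norm_nonneg)
  also have "\<dots> = 2 * (l2norm \<psi>)\<^sup>2 * l2norm \<phi>"
    by (simp add: power2_eq_square)
  finally show "l2norm (koopman_comm \<psi> \<phi>) \<le> 2 * (l2norm \<psi>)\<^sup>2 * l2norm \<phi>"
    using l2norm_lincomb_le[OF koopman_L2[OF \<psi>] \<psi>, of "l2inner \<phi> \<psi>" "l2inner (koopman \<phi>) \<psi>"]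
    unfolding koopman_comm_eq l2norm_koopman[OF \<psi>] by linarith
qed

lemma l2inner_ruelle_comm:
  assumes "\<psi> \<in> L2" "\<phi> \<in> L2" "g \<in> L2"
  shows "l2inner (ruelle_comm \<psi> \<phi>) g = - l2inner \<phi> (koopman_comm \<psi> g)"
proof -
  have "l2inner (ruelle_comm \<psi> \<phi>) g
      = l2inner \<phi> \<psi> * l2inner \<psi> (koopman g) - l2inner \<phi> (koopman \<psi>) * l2inner \<psi> g"
    using assms ruelle_L2[OF assms(1)]
    by (simp add: ruelle_comm_eq l2inner_lincomb_left l2inner_ruelle_koopman l2inner_commute[of \<psi> \<phi>])
  moreover have "l2inner \<phi> (koopman_comm \<psi> g)
      = l2inner g \<psi> * l2inner \<phi> (koopman \<psi>) - l2inner (koopman g) \<psi> * l2inner \<phi> \<psi>"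
    using assms koopman_L2[OF assms(1)] by (simp add: koopman_comm_eq l2inner_lincomb_right)
  ultimately show ?thesis
    by (simp add: l2inner_commute[of g \<psi>] l2inner_commute[of "koopman g" \<psi>] algebra_simps)
qed

lemma l2norm_ruelle_comm_le:
  assumes "\<psi> \<in> L2" "\<phi> \<in> L2"
  shows "l2norm (ruelle_comm \<psi> \<phi>) \<le> opnorm (koopman_comm \<psi>) * l2norm \<phi>"
proof (rule l2norm_le_opnorm_adjoint[OF bounded_homogeneous_op_koopman_comm[OF assms(1)] _ _ assms(2)])
  show "ruelle_comm \<psi> f \<in> L2" if "f \<in> L2" for f
    unfolding ruelle_comm_eq using ruelle_L2[OF assms(1)] assms(1) by (rule L2_lincomb)
  show "\<bar>l2inner (ruelle_comm \<psi> f) g\<bar> = \<bar>l2inner f (koopman_comm \<psi> g)\<bar>"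
    if "f \<in> L2" "g \<in> L2" for f g
    using l2inner_ruelle_comm[OF assms(1) that] by simp
qed

lemma bounded_homogeneous_op_ruelle_comm:
  assumes \<psi>: "\<psi> \<in> L2"
  shows "bounded_homogeneous_op (ruelle_comm \<psi>)"
  unfolding bounded_homogeneous_op_def
proof (intro conjI ballI allI exI)
  fix \<phi> c
  assume "\<phi> \<in> L2"
  show "ruelle_comm \<psi> \<phi> \<in> L2"
    unfolding ruelle_comm_eq using ruelle_L2[OF \<psi>] \<psi> by (rule L2_lincomb)
  show "ruelle_comm \<psi> (\<lambda>x. c * \<phi> x) = (\<lambda>x. c * ruelle_comm \<psi> \<phi> x)"
    unfolding ruelle_comm_eq ruelle_scale l2inner_scale_left by (simp add: algebra_simps)
  show "l2norm (ruelle_comm \<psi> \<phi>) \<le> opnorm (koopman_comm \<psi>) * l2norm \<phi>"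
    using \<psi> \<open>\<phi> \<in> L2\<close> by (rule l2norm_ruelle_comm_le)
qed

lemma opnorm_ruelle_comm_le: "\<psi> \<in> L2 \<Longrightarrow> opnorm (ruelle_comm \<psi>) \<le> opnorm (koopman_comm \<psi>)"
  using l2norm_ruelle_comm_le by (intro opnorm_least) fastforce

lemma l2norm_koopman_comm:
  assumes \<psi>: "\<psi> \<in> L2" "l2norm \<psi> = 1" and \<phi>: "\<phi> \<in> L2"
  shows "l2norm (koopman_comm \<psi> \<phi>) = sqrt ((l2inner \<phi> \<psi>)\<^sup>2
           - 2 * l2inner \<phi> \<psi> * l2inner (koopman \<phi>) \<psi> * l2inner (koopman \<psi>) \<psi>
           + (l2inner (koopman \<phi>) \<psi>)\<^sup>2)"
proof (rule real_sqrt_unique[symmetric])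
  show "(l2norm (koopman_comm \<psi> \<phi>))\<^sup>2 = (l2inner \<phi> \<psi>)\<^sup>2
           - 2 * l2inner \<phi> \<psi> * l2inner (koopman \<phi>) \<psi> * l2inner (koopman \<psi>) \<psi>
           + (l2inner (koopman \<phi>) \<psi>)\<^sup>2"
    using l2norm_lincomb_squared[OF koopman_L2[OF \<psi>(1)] \<psi>(1),
        of "l2inner \<phi> \<psi>" "l2inner (koopman \<phi>) \<psi>"]
    by (simp add: koopman_comm_eq l2norm_koopman \<psi>)
qed (rule l2norm_nonneg)

theorem theorem1p8:
  fixes \<psi> :: "omega \<Rightarrow> real"
  assumes "\<psi> \<in> L2"
    and "\<not> (\<exists>c. AE x in mu. \<psi> x = c)"
    and "l2norm \<psi> = 1"
  shows "hopnorm (dirac_comm (proj \<psi>)) =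
           opnorm (\<lambda>\<phi> x. koopman (proj \<psi> \<phi>) x - proj \<psi> (koopman \<phi>) x)
    \<and> opnorm (\<lambda>\<phi> x. koopman (proj \<psi> \<phi>) x - proj \<psi> (koopman \<phi>) x) =
      Sup ((\<lambda>\<phi>. sqrt ((l2inner \<phi> \<psi>)\<^sup>2
                 - 2 * l2inner \<phi> \<psi> * l2inner (koopman \<phi>) \<psi> * l2inner (koopman \<psi>) \<psi>
                 + (l2inner (koopman \<phi>) \<psi>)\<^sup>2))
           ` {\<phi> \<in> L2. l2norm \<phi> = 1})"
proof -
  have comm: "(\<lambda>\<phi> x. koopman (proj \<psi> \<phi>) x - proj \<psi> (koopman \<phi>) x) = koopman_comm \<psi>"
    by (intro ext) (simp add: koopman_comm_def)
  have "hopnorm (dirac_comm (proj \<psi>)) = max (opnorm (koopman_comm \<psi>)) (opnorm (ruelle_comm \<psi>))"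
    unfolding dirac_comm_proj using assms(1)
    by (intro hopnorm_antidiagonal bounded_homogeneous_op_koopman_comm bounded_homogeneous_op_ruelle_comm)
  also have "\<dots> = opnorm (koopman_comm \<psi>)"
    using opnorm_ruelle_comm_le[OF assms(1)] by simp
  finally show ?thesis
    unfolding comm opnorm_def using l2norm_koopman_comm[OF assms(1,3)] by simp
qed

end
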